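(* For all nonnegative integers $c_<$, $c_=$ and $m$, $$\sum_{a=0}^{m}(a+1)\frac{\binom{c_<}{a}\binom{c_<+c_=-a}{m-a}}{\binom{m}{a}}=\frac{(m+1)(m+2)}{(c_=+1)(c_=+2)}\binom{c_<+c_=+2}{m+2}-\frac{(c_<+1)(c_<-m)}{c_=+1}\binom{c_<}{m}+\frac{(c_<-m)(c_<-m-1)}{c_=+2}\binom{c_<}{m}.$$
   Context: Binomial coefficients use the convention $\binom{p}{q}=0$ when $q>p$ or $q<0$ (for nonnegative integer $p$). *)

theory Defs
  imports Complex_Main
begin

end

theory Submission
  imports Defs
begin

(* Trinomial revision removes the denominator: each summand is K * (a + 1) * C(c + e - a, e) with
   K = C(c + e, m) / C(c + e, c) independent of a.  Putting r = c - a, the weight a + 1 becomes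
   c + 1 - r, and (c + 1 - r) * C(r + e, e) is the forward difference of choose_antidiff c e, so the
   sum telescopes.  Its two boundary values, times K, give the first and the last two terms of the
   right-hand side. *)

definition choose_antidiff :: "nat \<Rightarrow> nat \<Rightarrow> nat \<Rightarrow> real" where
  "choose_antidiff c e r =
     ((real c + 1) * real r / (real e + 1) - real r * (real r - 1) / (real e + 2)) * real (r + e choose e)"

lemma choose_antidiff_0 [simp]: "choose_antidiff c e 0 = 0"
  by (simp add: choose_antidiff_def)

lemma Suc_times_choose_Suc_add: "Suc r * (Suc r + e choose e) = (Suc r + e) * (r + e choose e)"
  using binomial_absorb_comp[of "Suc r + e" e] by simp

lemma choose_antidiff_Suc_diff:
  "choose_antidiff c e (Suc r) - choose_antidiff c e r = (real c + 1 - real r) * real (r + e choose e)"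
proof -
  have Suc_choose: "real (Suc r + e choose e) = (real r + 1 + real e) / (real r + 1) * real (r + e choose e)"
    using arg_cong[OF Suc_times_choose_Suc_add[of r e], of real] by (simp add: field_simps)
  show ?thesis
    unfolding choose_antidiff_def Suc_choose of_nat_Suc
    by (simp add: divide_simps add_pos_nonneg) (simp add: algebra_simps)
qed

lemma choose_antidiff_Suc_self:
  "choose_antidiff c e (Suc c) =
     (real c + real e + 1) * (real c + real e + 2) / ((real e + 1) * (real e + 2)) * real (c + e choose c)"
proof -
  have Suc_choose: "real (Suc c + e choose e) = (real c + 1 + real e) / (real c + 1) * real (c + e choose c)"
    using arg_cong[OF Suc_times_choose_Suc_add[of c e], of real] binomial_symmetric[of e "c + e"]
    by (simp add: field_simps)
  show ?thesis
    unfolding choose_antidiff_def Suc_choose of_nat_Suc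
    by (simp add: divide_simps add_pos_nonneg) (simp add: algebra_simps)
qed

lemma sum_Suc_times_choose_eq_antidiff:
  "k \<le> n \<Longrightarrow> (\<Sum>a=0..k. real (a + 1) * real ((n + e - a) choose e))
     = choose_antidiff n e (Suc n) - choose_antidiff n e (n - k)"
proof (induction k)
  case 0
  show ?case using choose_antidiff_Suc_diff[of n e n] by simp
next
  case (Suc k)
  then have "n - k = Suc (n - Suc k)" and "n + e - Suc k = n - Suc k + e"
    by simp_all
  then show ?case
    using Suc choose_antidiff_Suc_diff[of n e "n - Suc k"] by (simp add: of_nat_diff)
qed

lemma binomial_absorb_twice:
  "(m + 1) * (m + 2) * (n + 2 choose (m + 2)) = (n + 1) * (n + 2) * (n choose m)"
proof -
  have "(m + 2) * (n + 2 choose (m + 2)) = (n + 2) * (n + 1 choose (m + 1))"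
    using Suc_times_binomial[of "Suc m" "Suc n"] by (simp add: numeral_2_eq_2)
  moreover have "(m + 1) * (n + 1 choose (m + 1)) = (n + 1) * (n choose m)"
    using Suc_times_binomial[of m n] by simp
  ultimately show ?thesis by (metis mult.assoc mult.commute mult.left_commute)
qed

lemma choose_mult_swap:
  assumes "a \<le> m"
  shows "(c choose a) * ((c + e - a) choose (m - a)) * (c + e choose c)
       = (m choose a) * (c + e choose m) * ((c + e - a) choose e)"
proof (cases "a \<le> c \<and> m \<le> c + e")
  case True
  have "(c + e choose m) * (m choose a) = (c + e choose a) * ((c + e - a) choose (m - a))"
    using True assms by (simp add: choose_mult)
  moreover have "(c + e choose c) * (c choose a) = (c + e choose a) * ((c + e - a) choose e)"
    using True choose_mult[of a c "c + e"] binomial_symmetric[of "c - a" "c + e - a"] by simp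
  ultimately show ?thesis by (metis mult.commute mult.left_commute)
next
  case False
  then consider "c < a" "c + e - a < e" | "c < a" "c + e < m" | "a \<le> c" "c + e - a < m - a"
    using assms by linarith
  then show ?thesis by cases (simp_all add: binomial_eq_0)
qed

lemma choose_ratio_eq:
  assumes "a \<le> m"
  shows "real (c choose a) * real ((c + e - a) choose (m - a)) / real (m choose a)
       = real (c + e choose m) / real (c + e choose c) * real ((c + e - a) choose e)"
proof -
  have "real (c choose a) * real ((c + e - a) choose (m - a)) * real (c + e choose c)
      = real (m choose a) * real (c + e choose m) * real ((c + e - a) choose e)"
    using arg_cong[OF choose_mult_swap[OF assms, of c e], of real] by simp
  moreover have "real (m choose a) > 0" "real (c + e choose c) > 0"
    using assms by simp_all
  ultimately show ?thesis by (simp add: field_simps)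
qed

lemma choose_antidiff_Suc_self_scaled:
  "real (c + e choose m) / real (c + e choose c) * choose_antidiff c e (Suc c)
     = real ((m + 1) * (m + 2)) / real ((e + 1) * (e + 2)) * real ((c + e + 2) choose (m + 2))"
proof -
  have "real (c + e choose c) \<noteq> 0"
    by simp
  then have "real (c + e choose m) / real (c + e choose c) * choose_antidiff c e (Suc c)
      = real ((c + e + 1) * (c + e + 2) * (c + e choose m)) / real ((e + 1) * (e + 2))"
    unfolding choose_antidiff_Suc_self of_nat_mult of_nat_add of_nat_1 of_nat_numeral by simp
  also have "\<dots> = real ((m + 1) * (m + 2) * ((c + e + 2) choose (m + 2))) / real ((e + 1) * (e + 2))"
    by (simp only: binomial_absorb_twice)
  finally show ?thesis
    by (simp only: of_nat_mult times_divide_eq_left)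
qed

lemma choose_antidiff_diff_scaled:
  "real (c + e choose m) / real (c + e choose c) * choose_antidiff c e (c - m)
     = ((real c + 1) * (real c - real m) / (real e + 1)
        - (real c - real m) * (real c - real m - 1) / (real e + 2)) * real (c choose m)"
proof (cases "m \<le> c")
  case True
  have "real (c choose m) = real (c + e choose m) / real (c + e choose c) * real (c - m + e choose e)"
    using choose_ratio_eq[of m m c e] True by (simp add: add.commute add_diff_assoc2)
  with True show ?thesis
    by (simp add: choose_antidiff_def of_nat_diff)
next
  case False
  then show ?thesis by (simp add: binomial_eq_0)
qed

theorem lemma3:
  fixes cl ce m :: nat
  shows "(\<Sum>a=0..m. real (a + 1) * real (cl choose a) * real ((cl + ce - a) choose (m - a))
            / real (m choose a))
       = real ((m + 1) * (m + 2)) / real ((ce + 1) * (ce + 2)) * real ((cl + ce + 2) choose (m + 2))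
         - (real cl + 1) * (real cl - real m) / (real ce + 1) * real (cl choose m)
         + (real cl - real m) * (real cl - real m - 1) / (real ce + 2) * real (cl choose m)"
proof -
  define K where "K = real (cl + ce choose m) / real (cl + ce choose cl)"
  let ?summand = "\<lambda>a. real (a + 1) * real (cl choose a) * real ((cl + ce - a) choose (m - a))
                     / real (m choose a)"
  \<comment> \<open>Cut at cl first: for ce = 0 the factor C(cl + ce - a, ce) is 1, not 0, when a > cl.\<close>
  have "(\<Sum>a=0..m. ?summand a) = (\<Sum>a=0..min m cl. ?summand a)"
    by (rule sum.mono_neutral_right) (auto simp: binomial_eq_0)
  also have "\<dots> = (\<Sum>a=0..min m cl. K * (real (a + 1) * real ((cl + ce - a) choose ce)))"
  proof (rule sum.cong)
    fix a assume "a \<in> {0..min m cl}"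
    then have "real (cl choose a) * real ((cl + ce - a) choose (m - a)) / real (m choose a)
        = K * real ((cl + ce - a) choose ce)"
      unfolding K_def by (intro choose_ratio_eq) simp
    then show "?summand a = K * (real (a + 1) * real ((cl + ce - a) choose ce))"
      by (metis mult.assoc mult.left_commute times_divide_eq_right)
  qed simp
  also have "\<dots> = K * (\<Sum>a=0..min m cl. real (a + 1) * real ((cl + ce - a) choose ce))"
    by (rule sum_distrib_left[symmetric])
  also have "\<dots> = K * choose_antidiff cl ce (Suc cl) - K * choose_antidiff cl ce (cl - m)"
    using sum_Suc_times_choose_eq_antidiff[of "min m cl" cl ce] by (simp add: right_diff_distrib min_def)
  finally show ?thesis
    unfolding K_def choose_antidiff_Suc_self_scaled choose_antidiff_diff_scaled
    by (simp add: algebra_simps)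
qed

end
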